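(* Let $T$ be a rooted binary tree with black/white-coloured leaves and the induced node colouring and classification as described in the context, and suppose $T$ contains more than one maximal black subtree. Then no SPR operation on $T$ belonging to the class $(\mathrm{B},\mathrm{b},\mathrm{W},\ast)$, $(\mathrm{B},\mathrm{b},\mathrm{B},\ast)$ or $(\mathrm{B},\mathrm{b},\mathrm{G},\ast)$ produces a compatible tree.
   Context: All trees are rooted binary trees; every non-leaf node has exactly two children and every non-root node $n$ has a parent $\mathrm{pa}(n)$. A "subtree" always means a node together with all of its descendants. Colouring: each leaf is coloured black (B) or white (W); an internal node is black if both children are black, white if both children are white, and grey (G) otherwise. A subtree is black (resp. white) if all its nodes are black (resp. white); it is maximal if no strictly larger subtree containing it is black (resp. white). Classification: a black or white node is of type "r" if it is the root of a maximal subtree of its own colour, and of type "b" otherwise; all grey nodes are of type "b" by convention. A tree is compatible if it contains at most one maximal black subtree. SPR operation $(u,v)$ on $T$: $u$ is a non-root node, $v$ is a node with $v\notin\{u,\mathrm{pa}(u)\}$ and $v$ not a descendant of $u$; the subtree rooted at $u$ is pruned (the edge to $u$ is removed and $\mathrm{pa}(u)$ deleted, its other child taking its place), then regrafted by inserting a new node on the edge from $v$ to its parent (or as a new root above $v$ if $v$ is the root) whose two children are $v$ and $u$; colours of the resulting tree are recomputed by the same rule. The operation belongs to class $(x,y,z,w)$ where $x,z\in\{\mathrm{B},\mathrm{W},\mathrm{G}\}$ are the colours in $T$ of $u$ and $v$, and $y,w\in\{\mathrm{r},\mathrm{b}\}$ their classifications in $T$; $\ast$ denotes any value. *)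

theory Defs
  imports Main "HOL-Library.Sublist"
begin

(* Rooted binary trees; a leaf carries its colour (True = black, False = white). *)
datatype tree = Leaf bool | Node tree tree

datatype colour = Bk | Wh | Gr

(* Classification: R = type "r", Bt = type "b" *)
datatype kind = R | Bt

(* Nodes are addressed by paths from the root: False = left child, True = right child. *)
fun positions :: "tree \<Rightarrow> bool list set" where
  "positions (Leaf _) = {[]}"
| "positions (Node l r) = insert [] (Cons False ` positions l \<union> Cons True ` positions r)"

fun subtree :: "tree \<Rightarrow> bool list \<Rightarrow> tree" where
  "subtree t [] = t"
| "subtree (Node l r) (d # p) = subtree (if d then r else l) p"
| "subtree (Leaf b) (_ # _) = Leaf b"

fun replace :: "tree \<Rightarrow> bool list \<Rightarrow> tree \<Rightarrow> tree" where
  "replace t [] s = s"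
| "replace (Node l r) (d # p) s =
     (if d then Node l (replace r p s) else Node (replace l p s) r)"
| "replace (Leaf b) (_ # _) s = Leaf b"

fun tcolour :: "tree \<Rightarrow> colour" where
  "tcolour (Leaf b) = (if b then Bk else Wh)"
| "tcolour (Node l r) =
     (if tcolour l = Bk \<and> tcolour r = Bk then Bk
      else if tcolour l = Wh \<and> tcolour r = Wh then Wh else Gr)"

definition node_colour :: "tree \<Rightarrow> bool list \<Rightarrow> colour" where
  "node_colour t p = tcolour (subtree t p)"

definition mono_subtree :: "tree \<Rightarrow> bool list \<Rightarrow> colour \<Rightarrow> bool" where
  "mono_subtree t p c \<longleftrightarrow> p \<in> positions t \<and>
     (\<forall>q. p @ q \<in> positions t \<longrightarrow> node_colour t (p @ q) = c)"

definition maximal_subtree :: "tree \<Rightarrow> bool list \<Rightarrow> colour \<Rightarrow> bool" where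
  "maximal_subtree t p c \<longleftrightarrow> mono_subtree t p c \<and>
     (\<forall>q. strict_prefix q p \<longrightarrow> \<not> mono_subtree t q c)"

definition max_black_roots :: "tree \<Rightarrow> bool list set" where
  "max_black_roots t = {p. maximal_subtree t p Bk}"

definition compatible :: "tree \<Rightarrow> bool" where
  "compatible t \<longleftrightarrow> card (max_black_roots t) \<le> 1"

definition node_kind :: "tree \<Rightarrow> bool list \<Rightarrow> kind" where
  "node_kind t p =
     (if node_colour t p \<in> {Bk, Wh} \<and> maximal_subtree t p (node_colour t p) then R else Bt)"

(* validity of the SPR operation (u,v): u non-root, v not u, not pa(u),
   not a descendant of u; pa(u) = butlast u *)
definition is_spr :: "tree \<Rightarrow> bool list \<Rightarrow> bool list \<Rightarrow> bool" where
  "is_spr t u v \<longleftrightarrow> u \<in> positions t \<and> u \<noteq> [] \<and> v \<in> positions t \<and>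
     v \<noteq> u \<and> v \<noteq> butlast u \<and> \<not> prefix u v"

(* The SPR operation: prune the subtree at u (pa(u) is replaced by the sibling of u),
   then regraft above the (relocated) node v. *)
definition spr :: "tree \<Rightarrow> bool list \<Rightarrow> bool list \<Rightarrow> tree" where
  "spr t u v =
    (let pu = butlast u; sib = pu @ [\<not> last u];
         t' = replace t pu (subtree t sib);
         v' = (if prefix sib v then pu @ drop (length sib) v else v)
     in replace t' v' (Node (subtree t' v') (subtree t u)))"

definition spr_class :: "tree \<Rightarrow> bool list \<Rightarrow> bool list \<Rightarrow> colour \<times> kind \<times> colour \<times> kind" where
  "spr_class t u v = (node_colour t u, node_kind t u, node_colour t v, node_kind t v)"

end

theory Submission
  imports Defs
begin

text \<open>The number of maximal black subtrees is computed by a simple recursion: a black tree has one,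
and otherwise the counts of the two children add up. Since u is black but not the root of a maximal
black subtree, its parent and hence its sibling are black. Pruning u therefore replaces the black
parent by the black sibling and leaves the count unchanged. Regrafting a black subtree above v
either creates a black node (when v is black, again replacing a black subtree by a black one) or
adds the count of the pruned subtree to that of v; in neither case does the count drop, so it
stays above one.\<close>

fun black_count :: "tree \<Rightarrow> nat" where
  "black_count (Leaf b) = (if b then 1 else 0)"
| "black_count (Node l r) = (if tcolour (Node l r) = Bk then 1 else black_count l + black_count r)"

lemma black_count_Bk: "tcolour t = Bk \<Longrightarrow> black_count t = 1"
  by (cases t) (auto split: if_splits)

lemma Nil_in_positions [simp]: "[] \<in> positions t"
  by (cases t) auto

lemma finite_positions: "finite (positions t)"
  by (induction t) auto

lemma subtree_append: "subtree t (p @ q) = subtree (subtree t p) q"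
proof (induction p arbitrary: t)
  case (Cons d p)
  then show ?case
    by (cases t) (auto, metis subtree.simps(1,3) neq_Nil_conv)
qed simp

lemma append_in_positions_iff:
  "p @ q \<in> positions t \<longleftrightarrow> p \<in> positions t \<and> q \<in> positions (subtree t p)"
proof (induction p arbitrary: t)
  case (Cons d p)
  then show ?case by (cases t) auto
qed simp

lemma subtree_Node_if_snoc_in_positions:
  "p @ [d] \<in> positions t \<Longrightarrow> \<exists>l r. subtree t p = Node l r"
  by (metis append_in_positions_iff positions.simps(1) singletonD tree.exhaust list.distinct(1))

lemma tcolour_subtree_Bk: "tcolour s = Bk \<Longrightarrow> q \<in> positions s \<Longrightarrow> tcolour (subtree s q) = Bk"
proof (induction s arbitrary: q)
  case (Node l r)
  then show ?case by (auto split: if_splits)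
qed auto

lemma mono_subtree_Bk_iff:
  "mono_subtree t p Bk \<longleftrightarrow> p \<in> positions t \<and> tcolour (subtree t p) = Bk"
  unfolding mono_subtree_def node_colour_def
  by (metis append_Nil2 tcolour_subtree_Bk append_in_positions_iff subtree_append)

lemma maximal_subtree_Bk_Nil: "maximal_subtree t [] Bk \<longleftrightarrow> tcolour t = Bk"
  unfolding maximal_subtree_def mono_subtree_Bk_iff by simp

lemma maximal_subtree_Bk_Cons:
  "maximal_subtree (Node l r) (d # p) Bk \<longleftrightarrow>
     tcolour (Node l r) \<noteq> Bk \<and> maximal_subtree (if d then r else l) p Bk"
proof -
  have "(\<forall>q. strict_prefix q (d # p) \<longrightarrow> \<not> mono_subtree (Node l r) q Bk) \<longleftrightarrow>
      \<not> mono_subtree (Node l r) [] Bk \<and>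
      (\<forall>q. strict_prefix q p \<longrightarrow> \<not> mono_subtree (Node l r) (d # q) Bk)"
    by (metis list.exhaust strict_prefix_simps(2,3))
  then show ?thesis
    unfolding maximal_subtree_def by (auto simp: mono_subtree_Bk_iff simp del: tcolour.simps)
qed

lemma max_black_roots_Leaf: "max_black_roots (Leaf b) = (if b then {[]} else {})"
proof -
  have "maximal_subtree (Leaf b) p Bk \<longleftrightarrow> p = [] \<and> b" for p
    using maximal_subtree_Bk_Nil[of "Leaf b"]
    by (cases p) (auto simp: maximal_subtree_def mono_subtree_def)
  then show ?thesis
    unfolding max_black_roots_def by auto
qed

lemma max_black_roots_Node:
  "max_black_roots (Node l r) =
     (if tcolour (Node l r) = Bk then {[]}
      else Cons False ` max_black_roots l \<union> Cons True ` max_black_roots r)"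
proof -
  have "maximal_subtree (Node l r) p Bk \<longleftrightarrow>
     p \<in> (if tcolour (Node l r) = Bk then {[]}
           else Cons False ` max_black_roots l \<union> Cons True ` max_black_roots r)" for p
    by (cases p) (auto simp: maximal_subtree_Bk_Nil maximal_subtree_Bk_Cons max_black_roots_def
        simp del: tcolour.simps)
  then show ?thesis
    unfolding max_black_roots_def by blast
qed

lemma finite_max_black_roots: "finite (max_black_roots t)"
proof (rule finite_subset[OF _ finite_positions])
  show "max_black_roots t \<subseteq> positions t"
    by (auto simp: max_black_roots_def maximal_subtree_def mono_subtree_def)
qed

lemma card_max_black_roots: "card (max_black_roots t) = black_count t"
proof (induction t)
  case (Node l r)
  show ?case
  proof (cases "tcolour (Node l r) = Bk")
    case False
    have "card (Cons False ` max_black_roots l \<union> Cons True ` max_black_roots r)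
        = card (Cons False ` max_black_roots l) + card (Cons True ` max_black_roots r)"
      by (rule card_Un_disjoint) (auto simp: finite_max_black_roots)
    also have "\<dots> = black_count l + black_count r"
      using Node.IH by (simp add: card_image)
    finally show ?thesis
      using False by (simp only: max_black_roots_Node black_count.simps if_False)
  qed (simp only: max_black_roots_Node black_count.simps if_True, simp)
qed (simp add: max_black_roots_Leaf)

lemma tcolour_replace_Bk_iff:
  assumes "p \<in> positions t" and "tcolour s = Bk \<longleftrightarrow> tcolour (subtree t p) = Bk"
  shows "tcolour (replace t p s) = Bk \<longleftrightarrow> tcolour t = Bk"
  using assms
proof (induction t arbitrary: p)
  case (Node l r)
  then show ?case by (cases p) (auto split: if_splits)
qed auto

lemma black_count_replace:
  assumes "p \<in> positions t" and "tcolour s = Bk \<longleftrightarrow> tcolour (subtree t p) = Bk"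
  shows "black_count (replace t p s) + black_count (subtree t p) = black_count t + black_count s"
  using assms
proof (induction t arbitrary: p)
  case (Node l r)
  show ?case
  proof (cases "tcolour (Node l r) = Bk")
    case True
    then have "tcolour (replace (Node l r) p s) = Bk" "tcolour (subtree (Node l r) p) = Bk"
      using tcolour_replace_Bk_iff tcolour_subtree_Bk Node.prems by blast+
    then show ?thesis
      using True Node.prems(2) by (simp only: black_count_Bk)
  next
    case False
    then have "tcolour (replace (Node l r) p s) \<noteq> Bk"
      using tcolour_replace_Bk_iff Node.prems by blast
    then show ?thesis
      using Node False by (cases p; cases "hd p") (auto simp del: tcolour.simps)
  qed
qed auto

lemma positions_replace:
  assumes "p \<in> positions t"
  shows "q \<in> positions (replace t p s) \<longleftrightarrow>
     (q \<in> positions t \<and> \<not> prefix p q) \<or> (\<exists>w. q = p @ w \<and> w \<in> positions s)"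
  using assms
proof (induction t arbitrary: p q)
  case (Node l r)
  then show ?case
    by (cases p; cases q) (auto split: if_splits)
qed auto

definition sibling :: "bool list \<Rightarrow> bool list" where
  "sibling u = butlast u @ [\<not> last u]"

definition prune :: "tree \<Rightarrow> bool list \<Rightarrow> tree" where
  "prune t u = replace t (butlast u) (subtree t (sibling u))"

definition graft_above :: "tree \<Rightarrow> bool list \<Rightarrow> tree \<Rightarrow> tree" where
  "graft_above t v s = replace t v (Node (subtree t v) s)"

lemma is_spr_not_prefix_parent:
  assumes "\<not> prefix (sibling u) v" and "is_spr t u v"
  shows "\<not> prefix (butlast u) v"
proof
  assume "prefix (butlast u) v"
  then obtain e w where "v = butlast u @ e # w"
    using assms(2) unfolding is_spr_def by (metis append_Nil2 prefix_def neq_Nil_conv)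
  then have "v = (butlast u @ [e]) @ w"
    by simp
  moreover have "butlast u @ [e] = u \<or> butlast u @ [e] = sibling u"
    using assms(2) unfolding is_spr_def sibling_def by (cases "e = last u") auto
  ultimately have "prefix u v \<or> prefix (sibling u) v"
    unfolding prefix_def by blast
  then show False
    using assms unfolding is_spr_def by blast
qed

lemma spr_eq_graft_above_prune:
  assumes "is_spr t u v"
  obtains v' where "v' \<in> positions (prune t u)" and "spr t u v = graft_above (prune t u) v' (subtree t u)"
proof -
  have u: "u \<in> positions t" "u = butlast u @ [last u]" and v: "v \<in> positions t"
    using assms unfolding is_spr_def by auto
  then have parent: "butlast u \<in> positions t"
    using append_in_positions_iff by metis
  define v' where "v' = (if prefix (sibling u) v then butlast u @ drop (length (sibling u)) v else v)"
  have "v' \<in> positions (prune t u)"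
  proof (cases "prefix (sibling u) v")
    case True
    then obtain w where w: "v = sibling u @ w"
      by (auto simp: prefix_def)
    then have "w \<in> positions (subtree t (sibling u))"
      using v append_in_positions_iff by blast
    moreover have "v' = butlast u @ w"
      using True w unfolding v'_def by simp
    ultimately show ?thesis
      unfolding prune_def using positions_replace[OF parent] by blast
  next
    case False
    then have "\<not> prefix (butlast u) v"
      using assms by (rule is_spr_not_prefix_parent)
    then show ?thesis
      using False v positions_replace[OF parent] unfolding prune_def v'_def by auto
  qed
  moreover have "spr t u v = graft_above (prune t u) v' (subtree t u)"
    unfolding spr_def graft_above_def prune_def v'_def sibling_def Let_def ..
  ultimately show thesis
    using that by blast
qed

lemma black_count_prune:
  assumes "u \<in> positions t" and "u \<noteq> []" and "tcolour (subtree t (butlast u)) = Bk"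
  shows "black_count (prune t u) = black_count t"
proof -
  have u: "u = butlast u @ [last u]"
    using assms(2) by simp
  then obtain l r where "subtree t (butlast u) = Node l r"
    using assms(1) subtree_Node_if_snoc_in_positions by metis
  then have "tcolour (subtree t (sibling u)) = Bk"
    using assms(3) unfolding sibling_def by (simp add: subtree_append split: if_splits)
  moreover have "butlast u \<in> positions t"
    using assms(1) u append_in_positions_iff by metis
  ultimately show ?thesis
    using black_count_replace[of "butlast u" t "subtree t (sibling u)"] assms(3)
    unfolding prune_def by (simp add: black_count_Bk)
qed

lemma black_count_graft_above:
  assumes "v \<in> positions t" and "tcolour s = Bk"
  shows "black_count t \<le> black_count (graft_above t v s)"
proof (cases "tcolour (subtree t v) = Bk")
  case True
  then have "tcolour (Node (subtree t v) s) = Bk"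
    using assms(2) by simp
  then show ?thesis
    using black_count_replace[OF assms(1), of "Node (subtree t v) s"] True
    unfolding graft_above_def by (simp add: black_count_Bk)
next
  case False
  then have "tcolour (Node (subtree t v) s) \<noteq> Bk"
    by simp
  then show ?thesis
    using black_count_replace[OF assms(1), of "Node (subtree t v) s"] False
    unfolding graft_above_def by (simp del: tcolour.simps)
qed

lemma parent_black_if_not_maximal:
  assumes "mono_subtree t u Bk" and "\<not> maximal_subtree t u Bk"
  shows "u \<noteq> [] \<and> tcolour (subtree t (butlast u)) = Bk"
proof -
  obtain q where q: "strict_prefix q u" "mono_subtree t q Bk"
    using assms unfolding maximal_subtree_def by blast
  then have "u \<noteq> []"
    by auto
  then have "prefix q (butlast u)"
    using q(1) by (metis append_butlast_last_id prefix_snoc strict_prefix_def)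
  then obtain w where "butlast u = q @ w"
    by (auto simp: prefix_def)
  moreover have "butlast u \<in> positions t"
    using assms(1) \<open>u \<noteq> []\<close> append_in_positions_iff unfolding mono_subtree_Bk_iff
    by (metis append_butlast_last_id)
  ultimately show ?thesis
    using q(2) \<open>u \<noteq> []\<close> tcolour_subtree_Bk append_in_positions_iff subtree_append
    unfolding mono_subtree_Bk_iff by metis
qed

theorem lemma2:
  fixes T :: tree and u v :: "bool list"
  assumes "card (max_black_roots T) > 1"
    and "is_spr T u v"
    and "spr_class T u v \<in> {(Bk, Bt, Wh, y) | y. True} \<union> {(Bk, Bt, Bk, y) | y. True}
                            \<union> {(Bk, Bt, Gr, y) | y. True}"
  shows "\<not> compatible (spr T u v)"
proof -
  have u: "u \<in> positions T" "node_colour T u = Bk" "node_kind T u = Bt"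
    using assms(2,3) unfolding is_spr_def spr_class_def by auto
  then have "mono_subtree T u Bk" "\<not> maximal_subtree T u Bk"
    unfolding mono_subtree_Bk_iff node_colour_def node_kind_def by auto
  then have "u \<noteq> []" "tcolour (subtree T (butlast u)) = Bk"
    using parent_black_if_not_maximal by blast+
  then have pruned: "black_count (prune T u) = black_count T"
    using black_count_prune u(1) by blast
  obtain v' where v': "v' \<in> positions (prune T u)"
    and spr: "spr T u v = graft_above (prune T u) v' (subtree T u)"
    using spr_eq_graft_above_prune[OF assms(2)] .
  have "black_count (prune T u) \<le> black_count (spr T u v)"
    unfolding spr using black_count_graft_above[OF v'] u(2) unfolding node_colour_def by blast
  then show ?thesis
    using assms(1) pruned unfolding compatible_def card_max_black_roots by simp
qed

end
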